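(* Let $p,q\ge 3$ be distinct, relatively prime odd integers. Then $$p\sum_{n=1}^{q-1}\frac{\cot(\pi n/q)\cot(\pi np/q)}{\sin^4(\pi n/q)}+q\sum_{n=1}^{p-1}\frac{\cot(\pi n/p)\cot(\pi nq/p)}{\sin^4(\pi n/p)}=\frac{2p^6+2q^6-7p^4q^2-7p^2q^4+7p^4+7q^4-35p^2q^2+31}{945}.$$ *)

theory Defs
  imports Complex_Main
begin

end

theory Submission
  imports Defs "HOL-Computational_Algebra.Polynomial" "HOL-Analysis.Complex_Transcendental"
begin

(* With w = e^(2it) one has cot t = i(w+1)/(w-1) and sin^4 t = (w-1)^4/(16 w^2), so every
   summand is a rational function evaluated at a root of unity. In the variable z = w - 1 let
   A_n(z) = ((1+z)^n - 1)/z, whose roots are the w - 1 for the nontrivial n-th roots of unity w;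
   for coprime p, q the roots of E = A_p A_q are exactly the points of both sums. The function
     F(z) = pq w(w+1)(w^p+1)(w^q+1) / (z^7 E(z))
   has residue -p/8 (resp. -q/8) times a summand at each root of E, and it vanishes to order 3 at
   infinity, so the residues of F add up to zero. The residue at 0 is the z^6-coefficient of the
   degree-6 Taylor polynomial alpha of z^7 F, which only involves the expansions of
   n z (w^n+1)/(w^n-1) and is a polynomial in p and q. Instead of the residue theorem we write
   z^7 F = alpha + z^7 beta/E with a polynomial beta and use that the sum of beta/E' over the roots
   of E is the top coefficient of beta (Lagrange interpolation). *)

section \<open>Sums over the roots of a polynomial\<close>

lemma root_linear_factor:
  fixes E :: "'a::field poly"
  assumes root: "poly E z = 0" and E: "E \<noteq> 0"
  defines "L \<equiv> E div [:-z, 1:]"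
  shows "E = [:-z, 1:] * L" and "degree L = degree E - 1" and "lead_coeff L = lead_coeff E"
    and "poly (pderiv E) z = poly L z"
proof -
  show E_eq: "E = [:-z, 1:] * L"
    using root unfolding L_def poly_eq_0_iff_dvd by (rule dvd_mult_div_cancel[symmetric])
  then have "L \<noteq> 0" using E by auto
  then have "degree E = degree L + 1"
    using degree_mult_eq[of "[:-z, 1:]" L] E_eq by simp
  then show "degree L = degree E - 1" by simp
  have "lead_coeff ([:-z, 1:] * L) = lead_coeff [:-z, 1:] * lead_coeff L"
    by (rule lead_coeff_mult)
  then show "lead_coeff L = lead_coeff E" unfolding E_eq[symmetric] by simp
  have "pderiv ([:-z, 1:] * L) = [:-z, 1:] * pderiv L + L * pderiv [:-z, 1:]"
    by (rule pderiv_mult)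
  then show "poly (pderiv E) z = poly L z" unfolding E_eq[symmetric] by (simp add: pderiv_pCons)
qed

lemma lagrange_interpolation_pderiv:
  fixes E b :: "'a::field poly"
  assumes card: "card Z = degree E" and roots: "\<And>z. z \<in> Z \<Longrightarrow> poly E z = 0"
    and deg: "degree b < degree E"
  shows "b = (\<Sum>z\<in>Z. smult (poly b z / poly (pderiv E) z) (E div [:-z, 1:]))"
    (is "b = ?Q")
proof -
  define L where "L z = E div [:-z, 1:]" for z
  have E: "E \<noteq> 0" using deg by auto
  have fin: "finite Z" using card deg by (intro card_ge_0_finite) simp
  note factor = root_linear_factor[OF roots E, folded L_def]
  have L_other: "poly (L z) w = 0" if "z \<in> Z" "w \<in> Z" "w \<noteq> z" for z w
    using arg_cong[OF factor(1)[OF that(1)], of "\<lambda>P. poly P w"] roots[OF that(2)] that(3)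
    by simp
  have L_self: "poly (L z) z \<noteq> 0" if "z \<in> Z" for z
  proof
    assume "poly (L z) z = 0"
    then have "Z \<subseteq> {w. poly (L z) w = 0}" using L_other[OF that] by auto
    moreover have "L z \<noteq> 0" using factor(1)[OF that] E by auto
    ultimately have "card Z \<le> card {w. poly (L z) w = 0}"
      by (intro card_mono poly_roots_finite)
    also have "\<dots> \<le> degree (L z)"
      by (rule card_poly_roots_bound) fact
    finally show False using factor(2)[OF that] card deg by simp
  qed
  have "poly b w = poly ?Q w" if "w \<in> Z" for w
  proof -
    have "poly ?Q w = (\<Sum>z\<in>{w}. poly b z / poly (pderiv E) z * poly (L z) w)"
      unfolding poly_sum poly_smult L_def[symmetric]
      by (rule sum.mono_neutral_right) (auto simp: fin that L_other)
    then show ?thesis using factor(4)[OF that] L_self[OF that] by simp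
  qed
  moreover have "degree ?Q < degree E"
  proof (rule degree_sum_less)
    fix z assume "z \<in> Z"
    then have "degree (smult (poly b z / poly (pderiv E) z) (L z)) \<le> degree E - 1"
      by (metis degree_smult_le factor(2))
    then show "degree (smult (poly b z / poly (pderiv E) z) (E div [:-z, 1:])) < degree E"
      using deg unfolding L_def by linarith
  qed (use deg in simp)
  ultimately show "b = ?Q"
    using card deg by (intro poly_eqI_degree[of Z]) simp_all
qed

lemma sum_div_pderiv_roots:
  fixes E b :: "'a::field poly"
  assumes card: "card Z = degree E" and roots: "\<And>z. z \<in> Z \<Longrightarrow> poly E z = 0"
    and deg: "degree b < degree E"
  shows "(\<Sum>z\<in>Z. poly b z / poly (pderiv E) z) = coeff b (degree E - 1) / lead_coeff E"
proof -
  have E: "E \<noteq> 0" using deg by auto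
  have "coeff b (degree E - 1)
      = (\<Sum>z\<in>Z. poly b z / poly (pderiv E) z * coeff (E div [:-z, 1:]) (degree E - 1))"
    using arg_cong[OF lagrange_interpolation_pderiv[OF assms], of "\<lambda>P. coeff P (degree E - 1)"]
    unfolding coeff_sum coeff_smult .
  also have "\<dots> = (\<Sum>z\<in>Z. poly b z / poly (pderiv E) z) * lead_coeff E"
    unfolding sum_distrib_right
    by (intro sum.cong refl) (metis root_linear_factor(2,3)[OF roots E])
  finally show ?thesis using E by simp
qed

section \<open>The polynomials A_n and the expansion at 0\<close>

lemma coeff_binomial_poly: "coeff ([:1, 1:] ^ n :: 'a::comm_semiring_1 poly) k = of_nat (n choose k)"
proof (cases "k \<le> n")
  case True
  then show ?thesis by (simp add: coeff_linear_poly_power)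
next
  case False
  then show ?thesis by (simp add: coeff_eq_0 degree_linear_power binomial_eq_0)
qed

lemma of_nat_choose_prod:
  "(of_nat (n choose k) :: 'a::field_char_0) = (\<Prod>i<k. of_nat n - of_nat i) / fact k"
  by (simp add: binomial_gbinomial gbinomial_prod_rev atLeast0LessThan)

lemma coeff_mult_degree_le_sum:
  fixes A B :: "'a::comm_semiring_1 poly"
  assumes "degree A \<le> a" and "degree B \<le> b"
  shows "coeff (A * B) (a + b) = coeff A a * coeff B b"
proof (cases "degree A = a \<and> degree B = b")
  case True
  then show ?thesis using coeff_mult_degree_sum by metis
next
  case False
  then have "coeff A a * coeff B b = 0" using assms by (auto simp: coeff_eq_0)
  moreover have "degree (A * B) < a + b"
    using False assms degree_mult_le[of A B] by linarith
  ultimately show ?thesis by (simp add: coeff_eq_0)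
qed

definition root_quot :: "nat \<Rightarrow> complex poly" where
  "root_quot n = poly_shift 1 ([:1, 1:] ^ n - 1)"

lemma coeff_root_quot: "coeff (root_quot n) k = of_nat (n choose Suc k)"
  by (simp add: root_quot_def coeff_poly_shift coeff_binomial_poly)

lemma pCons_0_root_quot: "pCons 0 (root_quot n) = [:1, 1:] ^ n - 1"
  by (rule poly_eqI) (auto simp: coeff_pCons coeff_root_quot coeff_binomial_poly split: nat.split)

lemma poly_root_quot: "z * poly (root_quot n) z = (1 + z) ^ n - 1"
  using arg_cong[OF pCons_0_root_quot, of "\<lambda>P. poly P z"] by (simp add: poly_power add.commute)

lemma poly_pderiv_root_quot:
  "poly (root_quot n) z + z * poly (pderiv (root_quot n)) z = of_nat n * (1 + z) ^ (n - 1)"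
proof -
  have "pderiv (pCons 0 (root_quot n)) = pderiv ([:1, 1:] ^ n - 1)"
    by (simp only: pCons_0_root_quot)
  then have "root_quot n + pCons 0 (pderiv (root_quot n)) = smult (of_nat n) ([:1, 1:] ^ (n - 1))"
    by (simp add: pderiv_pCons pderiv_power pderiv_diff)
  from arg_cong[OF this, of "\<lambda>P. poly P z"] show ?thesis
    by (simp add: poly_power add.commute)
qed

lemma degree_root_quot: "n \<ge> 1 \<Longrightarrow> degree (root_quot n) = n - 1"
  by (intro antisym degree_le le_degree) (auto simp: coeff_root_quot binomial_eq_0)

lemma lead_coeff_root_quot: "n \<ge> 1 \<Longrightarrow> lead_coeff (root_quot n) = 1"
  by (simp add: degree_root_quot coeff_root_quot)

(* Taylor polynomial of order 6 at z = 0 of X z ((1+z)^X + 1)/((1+z)^X - 1), whose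
   coefficients are polynomials in X *)
definition coth_taylor :: "complex \<Rightarrow> complex poly" where
  "coth_taylor X = [:2, 1, (X^2 - 1) / 6, (1 - X^2) / 12,
     -19/360 + X^2/18 - X^4/360, 3/80 - X^2/24 + X^4/240,
     -863/30240 + X^2/30 - 7*X^4/1440 + X^6/15120:]"

lemma monom_7_dvd_coth_taylor:
  "monom 1 7 dvd coth_taylor (of_nat n) * root_quot n - smult (of_nat n) ([:1, 1:] ^ n + 1)"
  unfolding monom_1_dvd_iff'
proof (intro allI impI)
  fix k :: nat assume "k < 7"
  then have "k \<in> {0, 1, 2, 3, 4, 5, 6}" by auto
  then show "coeff (coth_taylor (of_nat n) * root_quot n - smult (of_nat n) ([:1, 1:] ^ n + 1)) k = 0"
    unfolding coeff_diff coeff_mult coeff_smult coeff_add coeff_root_quot coeff_binomial_poly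
    by (elim insertE emptyE; simp add: coth_taylor_def of_nat_choose_prod eval_nat_numeral;
        simp add: field_simps)
qed

(* alpha of the introduction; [:2, 3, 1:] is w(w+1) *)
definition principal_numer :: "complex \<Rightarrow> complex \<Rightarrow> complex poly" where
  "principal_numer X Y = poly_cutoff 7 ([:2, 3, 1:] * coth_taylor X * coth_taylor Y)"

lemma principal_numer_commute: "principal_numer X Y = principal_numer Y X"
  by (simp only: principal_numer_def ac_simps)

lemma degree_principal_numer: "degree (principal_numer X Y) \<le> 6"
  by (rule degree_le) (simp add: principal_numer_def coeff_poly_cutoff)

lemma coeff_principal_numer_6:
  "coeff (principal_numer X Y) 6 =
     (2*X^6 + 2*Y^6 - 7*X^4*Y^2 - 7*X^2*Y^4 + 7*X^4 + 7*Y^4 - 35*X^2*Y^2 + 31) / 7560"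
  by (simp add: principal_numer_def coeff_poly_cutoff coth_taylor_def coeff_mult eval_nat_numeral;
      simp add: field_simps)

lemma monom_7_dvd_principal_numer:
  "monom 1 7 dvd [:2, 3, 1:] * coth_taylor X * coth_taylor Y - principal_numer X Y"
  by (simp add: monom_1_dvd_iff' principal_numer_def coeff_poly_cutoff)

(* E (z^7 F - alpha), which is z^7 beta *)
definition regular_numer :: "nat \<Rightarrow> nat \<Rightarrow> complex poly" where
  "regular_numer p q = smult (of_nat (p * q)) ([:2, 3, 1:] * ([:1, 1:] ^ p + 1) * ([:1, 1:] ^ q + 1))
     - principal_numer (of_nat p) (of_nat q) * (root_quot p * root_quot q)"

definition regular_poly :: "nat \<Rightarrow> nat \<Rightarrow> complex poly" where
  "regular_poly p q = regular_numer p q div monom 1 7"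

lemma regular_numer_eq: "regular_numer p q = monom 1 7 * regular_poly p q"
proof -
  define L where "L = ([:2, 3, 1:] :: complex poly)"
  define D where "D n = coth_taylor (of_nat n) * root_quot n - smult (of_nat n) ([:1, 1:] ^ n + 1)" for n
  define R where "R = L * coth_taylor (of_nat p) * coth_taylor (of_nat q) - principal_numer (of_nat p) (of_nat q)"
  have "regular_numer p q = R * (root_quot p * root_quot q)
      - L * (D p * (coth_taylor (of_nat q) * root_quot q) + smult (of_nat p) ([:1, 1:] ^ p + 1) * D q)"
    unfolding regular_numer_def L_def[symmetric] D_def R_def
    by (simp add: algebra_simps)
  moreover have "monom 1 7 dvd R" and "monom 1 7 dvd D n" for n
    unfolding R_def D_def L_def by (rule monom_7_dvd_principal_numer monom_7_dvd_coth_taylor)+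
  ultimately have "monom 1 7 dvd regular_numer p q"
    by (auto intro!: dvd_diff dvd_add dvd_smult intro: dvd_mult dvd_mult2)
  then show ?thesis by (simp add: regular_poly_def)
qed

lemma regular_poly_commute: "regular_poly p q = regular_poly q p"
  using principal_numer_commute[of "of_nat p" "of_nat q"]
  by (simp only: regular_poly_def regular_numer_def ac_simps)

lemma root_quot_nonzero: "n \<ge> 1 \<Longrightarrow> root_quot n \<noteq> 0"
  using lead_coeff_root_quot by force

lemma degree_root_quot_mult:
  "p \<ge> 1 \<Longrightarrow> q \<ge> 1 \<Longrightarrow> degree (root_quot p * root_quot q) = p + q - 2"
  by (simp add: degree_mult_eq root_quot_nonzero degree_root_quot)

lemma lead_coeff_root_quot_mult:
  "p \<ge> 1 \<Longrightarrow> q \<ge> 1 \<Longrightarrow> lead_coeff (root_quot p * root_quot q) = 1"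
  unfolding lead_coeff_mult by (simp add: lead_coeff_root_quot)

lemma regular_numer_top:
  assumes "p \<ge> 1" "q \<ge> 1"
  shows "degree (regular_numer p q) \<le> p + q + 4"
    and "coeff (regular_numer p q) (p + q + 4) = - coeff (principal_numer (of_nat p) (of_nat q)) 6"
proof -
  define B where "B n = ([:1, 1:] ^ n + 1 :: complex poly)" for n
  define N where "N = smult (of_nat (p * q)) ([:2, 3, 1:] * B p * B q)"
  define E where "E = root_quot p * root_quot q"
  have deg_B: "degree (B n) \<le> n" for n
    unfolding B_def by (intro degree_add_le) (simp_all add: degree_linear_power)
  have "degree N \<le> degree ([:2, 3, 1:] * B p * B q)"
    unfolding N_def by (rule degree_smult_le)
  also have "\<dots> \<le> degree ([:2, 3, 1:] * B p) + degree (B q)"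
    by (rule degree_mult_le)
  also have "\<dots> \<le> (2 + p) + q"
    using degree_mult_le[of "[:2, 3, 1:]" "B p"] deg_B[of p] deg_B[of q] by simp
  finally have deg_N: "degree N < p + q + 4" by simp
  have top: "p + q + 4 = 6 + degree E"
    using assms by (simp add: E_def degree_root_quot_mult)
  have lc_E: "lead_coeff E = 1"
    unfolding E_def using assms by (rule lead_coeff_root_quot_mult)
  have "degree (principal_numer (of_nat p) (of_nat q) * E) \<le> 6 + degree E"
    by (rule order_trans[OF degree_mult_le add_right_mono[OF degree_principal_numer]])
  then show "degree (regular_numer p q) \<le> p + q + 4"
    using deg_N unfolding regular_numer_def B_def[symmetric] N_def[symmetric] E_def[symmetric] top
    by (intro degree_diff_le) simp_all
  show "coeff (regular_numer p q) (p + q + 4) = - coeff (principal_numer (of_nat p) (of_nat q)) 6"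
    unfolding regular_numer_def B_def[symmetric] N_def[symmetric] E_def[symmetric] coeff_diff
    using coeff_mult_degree_le_sum[OF degree_principal_numer order_refl, where B = E] lc_E deg_N top
    by (simp add: coeff_eq_0)
qed

lemma coeff_regular_poly: "coeff (regular_poly p q) k = coeff (regular_numer p q) (k + 7)"
  by (simp add: regular_numer_eq coeff_monom_mult)

lemma regular_poly_top:
  assumes "p \<ge> 1" "q \<ge> 1" "p + q \<ge> 3"
  defines "E \<equiv> root_quot p * root_quot q"
  shows "degree (regular_poly p q) < degree E"
    and "coeff (regular_poly p q) (degree E - 1) = - coeff (principal_numer (of_nat p) (of_nat q)) 6"
proof -
  have deg_E: "degree E = p + q - 2"
    unfolding E_def using assms(1,2) by (rule degree_root_quot_mult)
  have "degree (regular_poly p q) \<le> degree E - 1"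
    using regular_numer_top(1)[OF assms(1,2)] deg_E assms(3)
    by (intro degree_le) (auto simp: coeff_regular_poly coeff_eq_0)
  then show "degree (regular_poly p q) < degree E" using deg_E assms(3) by simp
  show "coeff (regular_poly p q) (degree E - 1) = - coeff (principal_numer (of_nat p) (of_nat q)) 6"
    using regular_numer_top(2)[OF assms(1,2)] deg_E assms(3)
    by (simp add: coeff_regular_poly add.commute)
qed

lemma regular_poly_div_pderiv_at_root:
  assumes wq: "w ^ q = 1" and w1: "w \<noteq> 1" and wp: "w ^ p \<noteq> 1" and q: "q \<ge> 1"
  shows "poly (regular_poly p q) (w - 1) / poly (pderiv (root_quot p * root_quot q)) (w - 1)
         = 2 * of_nat p * (w^2 * (w + 1) * (w^p + 1) / ((w - 1)^5 * (w^p - 1)))"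
proof -
  define z where "z = w - 1"
  have z: "z \<noteq> 0" "w = 1 + z" using w1 by (simp_all add: z_def)
  have w0: "w \<noteq> 0" using wq q by (auto simp: power_0_left)
  have Aq: "poly (root_quot q) z = 0"
    using poly_root_quot[of z q] wq z by simp
  have Ap: "poly (root_quot p) z = (w ^ p - 1) / z"
    using poly_root_quot[of z p] z by (simp add: field_simps)
  have dAq: "poly (pderiv (root_quot q)) z = of_nat q / (w * z)"
  proof -
    have "z * poly (pderiv (root_quot q)) z = of_nat q * w ^ (q - 1)"
      using poly_pderiv_root_quot[of q z] Aq by (simp add: z(2))
    moreover have "w ^ (q - 1) = 1 / w" using wq q w0 by (simp add: power_diff)
    ultimately show ?thesis using z(1) w0 by (simp add: field_simps)
  qed
  have E': "poly (pderiv (root_quot p * root_quot q)) z = (w ^ p - 1) * of_nat q / (w * z ^ 2)"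
    by (simp add: pderiv_mult Aq Ap dAq power2_eq_square)
  have "poly [:1, 1:] z = w" and "poly [:2, 3, 1:] z = w * (w + 1)"
    by (simp_all add: z(2) algebra_simps)
  note w_eval = this
  have "poly (regular_numer p q) z = of_nat p * of_nat q * (2 * w * (w + 1) * (w ^ p + 1))"
    unfolding regular_numer_def poly_diff poly_smult poly_mult poly_add poly_power poly_1 w_eval Aq wq
    by (simp add: algebra_simps)
  then have \<beta>: "poly (regular_poly p q) z = of_nat p * of_nat q * (2 * w * (w + 1) * (w ^ p + 1)) / z ^ 7"
    using z by (simp add: regular_numer_eq poly_monom field_simps)
  have "(of_nat q :: complex) \<noteq> 0" "w ^ p - 1 \<noteq> 0" using q wp by simp_all
  then show ?thesis
    unfolding z_def[symmetric] \<beta> E' using z w0 by (simp add: field_simps eval_nat_numeral)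
qed

section \<open>Evaluation at roots of unity\<close>

lemma cot_sin_power_exp:
  fixes t :: real
  defines "a \<equiv> exp (2 * \<i> * complex_of_real t)"
  assumes a: "a \<noteq> 1"
  shows "complex_of_real (cot t) = \<i> * (a + 1) / (a - 1)"
    and "complex_of_real (sin t ^ 4) = (a - 1) ^ 4 / (16 * a ^ 2)"
proof -
  define c where "c = complex_of_real (cos t)"
  define s where "s = complex_of_real (sin t)"
  define e where "e = exp (\<i> * complex_of_real t)"
  have e: "e = c + \<i> * s"
    unfolding e_def c_def s_def cis_conv_exp[symmetric] by (simp add: complex_eq_iff)
  have pythagoras: "c ^ 2 + s ^ 2 = 1"
    unfolding c_def s_def by (metis of_real_add of_real_power of_real_1 sin_cos_squared_add2)
  have a_e: "a = e ^ 2"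
    unfolding a_def e_def by (simp add: exp_of_nat_mult[symmetric] mult_ac)
  have e0: "e \<noteq> 0" by (simp add: e_def)
  have i2: "\<i> * \<i> = -1" by simp
  have plus: "a + 1 = 2 * c * e"
    unfolding a_e e using pythagoras i2 by algebra
  have minus: "a - 1 = 2 * \<i> * s * e"
    unfolding a_e e using pythagoras i2 by algebra
  have s0: "s \<noteq> 0" using minus a by auto
  show "complex_of_real (cot t) = \<i> * (a + 1) / (a - 1)"
    unfolding plus minus using e0 s0 by (simp add: cot_def c_def s_def field_simps)
  show "complex_of_real (sin t ^ 4) = (a - 1) ^ 4 / (16 * a ^ 2)"
    unfolding minus unfolding a_e using e0 by (simp add: s_def field_simps eval_nat_numeral)
qed

lemma cot_mult_cot_div_sin_power_exp:
  fixes t :: real and p :: nat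
  defines "a \<equiv> exp (2 * \<i> * complex_of_real t)"
  assumes a: "a \<noteq> 1" and ap: "a ^ p \<noteq> 1"
  shows "complex_of_real (cot t * cot (p * t) / sin t ^ 4)
         = -16 * (a^2 * (a + 1) * (a^p + 1) / ((a - 1)^5 * (a^p - 1)))"
proof -
  have "a ^ p = exp (2 * \<i> * complex_of_real (p * t))"
    unfolding a_def by (simp add: exp_of_nat_mult[symmetric] mult_ac)
  then have cot_pt: "complex_of_real (cot (p * t)) = \<i> * (a^p + 1) / (a^p - 1)"
    using cot_sin_power_exp(1)[of "p * t"] ap by simp
  have "a \<noteq> 0" by (simp add: a_def)
  then show ?thesis
    unfolding of_real_mult of_real_divide cot_pt cot_sin_power_exp[of t, folded a_def, OF a]
    using a ap by (simp add: field_simps eval_nat_numeral)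
qed

definition unit_root :: "nat \<Rightarrow> nat \<Rightarrow> complex" where
  "unit_root q j = exp (2 * of_real pi * \<i> * of_nat j / of_nat q)"

lemma unit_root_power_order: "q \<ge> 1 \<Longrightarrow> unit_root q j ^ q = 1"
  unfolding unit_root_def by (rule complex_root_unity) simp

lemma unit_root_power_ne_1:
  assumes "q \<ge> 1" "coprime p q" "j \<in> {1..q-1}"
  shows "unit_root q j ^ p \<noteq> 1"
proof -
  have "\<not> q dvd j * p"
    using assms(2,3) by (auto simp: coprime_commute coprime_dvd_mult_left_iff dest: dvd_imp_le)
  then have "unit_root q (j * p) \<noteq> 1"
    unfolding unit_root_def using assms(1) by (subst complex_root_unity_eq_1) auto
  moreover have "unit_root q j ^ p = unit_root q (j * p)"
    unfolding unit_root_def by (simp add: exp_of_nat_mult[symmetric] mult_ac)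
  ultimately show ?thesis by simp
qed

lemma unit_root_ne_1: "q \<ge> 1 \<Longrightarrow> j \<in> {1..q-1} \<Longrightarrow> unit_root q j \<noteq> 1"
  using unit_root_power_ne_1[of q 1 j] by simp

lemma inj_on_unit_root: "q \<ge> 1 \<Longrightarrow> inj_on (\<lambda>j. unit_root q j - 1) {1..q-1}"
  unfolding inj_on_def unit_root_def by (auto simp: complex_root_unity_eq)

definition shifted_roots :: "nat \<Rightarrow> complex set" where
  "shifted_roots n = (\<lambda>j. unit_root n j - 1) ` {1..n-1}"

lemma card_shifted_roots: "n \<ge> 1 \<Longrightarrow> card (shifted_roots n) = n - 1"
  unfolding shifted_roots_def by (subst card_image[OF inj_on_unit_root]) simp_all

lemma poly_root_quot_shifted_roots:
  assumes "n \<ge> 1" "z \<in> shifted_roots n"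
  shows "poly (root_quot n) z = 0"
  using assms poly_root_quot[of z n] unit_root_power_order[OF assms(1)] unit_root_ne_1[OF assms(1)]
  by (auto simp: shifted_roots_def)

lemma shifted_roots_disjoint:
  assumes "p \<ge> 1" "q \<ge> 1" "coprime p q"
  shows "shifted_roots q \<inter> shifted_roots p = {}"
  using unit_root_power_ne_1[OF assms(2,3)] unit_root_power_order[OF assms(1)]
  by (fastforce simp: shifted_roots_def)

lemma sum_div_pderiv_root_quot_mult:
  assumes p: "p \<ge> 2" and q: "q \<ge> 2" and cop: "coprime p q"
  defines "f \<equiv> \<lambda>z. poly (regular_poly p q) z / poly (pderiv (root_quot p * root_quot q)) z"
  shows "sum f (shifted_roots q) + sum f (shifted_roots p)
       = - coeff (principal_numer (of_nat p) (of_nat q)) 6"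
proof -
  define E where "E = root_quot p * root_quot q"
  have p1: "p \<ge> 1" and q1: "q \<ge> 1" and pq: "p + q \<ge> 3" using p q by auto
  note disjoint = shifted_roots_disjoint[OF p1 q1 cop]
  have "card (shifted_roots q \<union> shifted_roots p) = (q - 1) + (p - 1)"
    using card_Un_disjoint[OF _ _ disjoint] card_shifted_roots p1 q1
    by (simp add: shifted_roots_def)
  then have card: "card (shifted_roots q \<union> shifted_roots p) = degree E"
    using p q by (simp add: E_def degree_root_quot_mult)
  have roots: "poly E z = 0" if "z \<in> shifted_roots q \<union> shifted_roots p" for z
    using that poly_root_quot_shifted_roots p1 q1 by (auto simp: E_def)
  have "sum f (shifted_roots q) + sum f (shifted_roots p) = sum f (shifted_roots q \<union> shifted_roots p)"
    by (rule sum.union_disjoint[symmetric, OF _ _ disjoint]) (simp_all add: shifted_roots_def)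
  also have "\<dots> = coeff (regular_poly p q) (degree E - 1) / lead_coeff E"
    unfolding f_def E_def
    by (rule sum_div_pderiv_roots[OF card[unfolded E_def] roots[unfolded E_def]
          regular_poly_top(1)[OF p1 q1 pq]])
  also have "\<dots> = - coeff (principal_numer (of_nat p) (of_nat q)) 6"
    using regular_poly_top(2)[OF p1 q1 pq] lead_coeff_root_quot_mult[OF p1 q1] by (simp add: E_def)
  finally show ?thesis .
qed

definition cot_summand :: "nat \<Rightarrow> nat \<Rightarrow> nat \<Rightarrow> real" where
  "cot_summand q p j = cot (pi * j / q) * cot (pi * j * p / q) / sin (pi * j / q) ^ 4"

lemma sum_div_pderiv_shifted_roots:
  assumes q: "q \<ge> 1" and cop: "coprime p q"
  shows "(\<Sum>z\<in>shifted_roots q. poly (regular_poly p q) z / poly (pderiv (root_quot p * root_quot q)) z)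
       = - (of_nat p / 8) * complex_of_real (\<Sum>j\<in>{1..q-1}. cot_summand q p j)"
proof -
  have term_value: "poly (regular_poly p q) (unit_root q j - 1)
        / poly (pderiv (root_quot p * root_quot q)) (unit_root q j - 1)
      = - (of_nat p / 8) * complex_of_real (cot_summand q p j)" if j: "j \<in> {1..q-1}" for j
  proof -
    have angle: "pi * j * p / q = p * (pi * j / q)" by simp
    have "unit_root q j = exp (2 * \<i> * complex_of_real (pi * j / q))"
      by (simp add: unit_root_def mult_ac)
    note trig = cot_mult_cot_div_sin_power_exp[of "pi * j / q" p, folded this]
    have trig_value: "complex_of_real (cot_summand q p j)
        = -16 * (unit_root q j ^ 2 * (unit_root q j + 1) * (unit_root q j ^ p + 1)
          / ((unit_root q j - 1) ^ 5 * (unit_root q j ^ p - 1)))"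
      unfolding cot_summand_def angle
      by (rule trig[OF unit_root_ne_1[OF q j] unit_root_power_ne_1[OF q cop j]])
    show ?thesis
      unfolding regular_poly_div_pderiv_at_root[OF unit_root_power_order[OF q]
          unit_root_ne_1[OF q j] unit_root_power_ne_1[OF q cop j] q] trig_value
      by simp
  qed
  have "(\<Sum>z\<in>shifted_roots q. poly (regular_poly p q) z / poly (pderiv (root_quot p * root_quot q)) z)
      = (\<Sum>j\<in>{1..q-1}. - (of_nat p / 8) * complex_of_real (cot_summand q p j))"
    unfolding shifted_roots_def sum.reindex[OF inj_on_unit_root[OF q]] o_def
    by (rule sum.cong[OF refl term_value])
  then show ?thesis by (simp add: sum_distrib_left)
qed

lemma cot_reciprocity:
  fixes p q :: nat
  assumes p: "p \<ge> 2" and q: "q \<ge> 2" and cop: "coprime p q"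
  shows "real p * (\<Sum>j\<in>{1..q-1}. cot_summand q p j) + real q * (\<Sum>j\<in>{1..p-1}. cot_summand p q j)
       = (2 * real p^6 + 2 * real q^6 - 7 * real p^4 * real q^2 - 7 * real p^2 * real q^4
          + 7 * real p^4 + 7 * real q^4 - 35 * real p^2 * real q^2 + 31) / 945"
    (is "real p * ?Sq + real q * ?Sp = ?rhs")
proof -
  have p1: "p \<ge> 1" and q1: "q \<ge> 1" using p q by auto
  have Sp: "(\<Sum>z\<in>shifted_roots p. poly (regular_poly p q) z / poly (pderiv (root_quot p * root_quot q)) z)
      = - (of_nat q / 8) * complex_of_real ?Sp"
    using sum_div_pderiv_shifted_roots[OF p1 cop[unfolded coprime_commute[of p]]]
    by (simp add: regular_poly_commute mult.commute)
  have "complex_of_real (real p * ?Sq + real q * ?Sp)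
      = -8 * (- (of_nat p / 8) * complex_of_real ?Sq + - (of_nat q / 8) * complex_of_real ?Sp)"
    by (simp add: algebra_simps)
  also have "\<dots> = 8 * coeff (principal_numer (of_nat p) (of_nat q)) 6"
    using sum_div_pderiv_root_quot_mult[OF p q cop]
    unfolding sum_div_pderiv_shifted_roots[OF q1 cop] Sp by simp
  also have "\<dots> = complex_of_real ?rhs"
    unfolding coeff_principal_numer_6 by (simp add: field_simps)
  finally show ?thesis unfolding of_real_eq_iff .
qed

theorem mainTheorem18:
  fixes p q :: int
  assumes "p \<ge> 3" and "q \<ge> 3" and "p \<noteq> q" and "odd p" and "odd q"
    and "coprime p q"
  shows "real_of_int p * (\<Sum>n\<in>{1..q-1}. cot (pi * n / q) * cot (pi * n * p / q) / (sin (pi * n / q)) ^ 4)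
       + real_of_int q * (\<Sum>n\<in>{1..p-1}. cot (pi * n / p) * cot (pi * n * q / p) / (sin (pi * n / p)) ^ 4)
       = (2 * p^6 + 2 * q^6 - 7 * p^4 * q^2 - 7 * p^2 * q^4 + 7 * p^4 + 7 * q^4 - 35 * p^2 * q^2 + 31) / 945"
proof -
  obtain a b :: nat where ab: "p = int a" "q = int b"
    using assms(1,2) by (metis nonneg_int_cases order_trans zero_le_numeral)
  have int_sum: "(\<Sum>n\<in>{1..int m - 1}. cot (pi * n / m) * cot (pi * n * k / m) / sin (pi * n / m) ^ 4)
      = (\<Sum>j\<in>{1..m-1}. cot_summand m k j)" if "m \<ge> 1" for m k :: nat
  proof -
    have "{1..int m - 1} = int ` {1..m-1}"
      using that by (simp add: image_int_atLeastAtMost of_nat_diff)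
    then show ?thesis by (simp add: sum.reindex cot_summand_def)
  qed
  have "a \<ge> 2" "b \<ge> 2" "coprime a b" using assms(1,2,6) ab by auto
  from cot_reciprocity[OF this] show ?thesis
    unfolding ab using int_sum[of a b] int_sum[of b a] \<open>a \<ge> 2\<close> \<open>b \<ge> 2\<close> by simp
qed

end
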